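(* Let $n,m\geq 1$ and let $S_1,\dots,S_{n+m}$ be real random variables which are i.i.d. and have almost surely no ties (i.e. $S_i\neq S_j$ for all $i\neq j$ a.s.). Let $F(s)=\mathbb{P}(S_1\leq s)$, $s\in\mathbb{R}$, be their common c.d.f. Define the conformal $p$-values $$p_i=\frac{1}{n+1}\Big(1+\sum_{j=1}^n \mathbf{1}\{S_j\geq S_{n+i}\}\Big),\quad i\in\{1,\dots,m\}.$$ Set $U=(U_1,\dots,U_n)=(1-F(S_1),\dots,1-F(S_n))$. Then, conditionally on $\mathcal{D}_{\mathrm{cal}}=(S_1,\dots,S_n)$, the $p$-values $p_1,\dots,p_m$ are i.i.d. with common distribution $P^U$. In addition, $U_1,\dots,U_n$ are i.i.d. $\mathrm{Unif}[0,1]$.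
   Context: For a fixed vector $U=(U_1,\dots,U_n)\in[0,1]^n$, let $0=U_{(0)}\leq U_{(1)}\leq\dots\leq U_{(n)}\leq U_{(n+1)}=1$, where $U_{(1)}\leq\dots\leq U_{(n)}$ are the increasingly ordered values of $U_1,\dots,U_n$. $P^U$ denotes the discrete distribution on $\{\ell/(n+1):\ell\in\{1,\dots,n+1\}\}$ with $P^U(\{\ell/(n+1)\})=U_{(\ell)}-U_{(\ell-1)}$, $\ell\in\{1,\dots,n+1\}$; equivalently its c.d.f. is $F^U(x)=U_{(\lfloor (n+1)x\rfloor)}$, $x\in[0,1]$. *)

theory Defs
  imports "HOL-Probability.Probability"
begin

text \<open>Order statistics of a vector U = (U 0, ..., U (n-1)) (0-based indexing),
  with the conventions U_(0) = 0 and U_(n+1) = 1.\<close>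
definition order_stat :: "nat \<Rightarrow> (nat \<Rightarrow> real) \<Rightarrow> nat \<Rightarrow> real" where
  "order_stat n U l =
     (if l = 0 then 0 else if l = n + 1 then 1 else sort (map U [0..<n]) ! (l - 1))"

text \<open>The discrete distribution P^U on {l/(n+1) : l = 1..n+1},
  P^U({l/(n+1)}) = U_(l) - U_(l-1), given as its value on a set B.\<close>
definition PU :: "nat \<Rightarrow> (nat \<Rightarrow> real) \<Rightarrow> real set \<Rightarrow> real" where
  "PU n U B = (\<Sum>l\<in>{1..n+1}. if real l / real (n + 1) \<in> B
                 then order_stat n U l - order_stat n U (l - 1) else 0)"

text \<open>Conformal p-value for test index i (test score S (n+i)), calibration S 0..S (n-1).\<close>
definition conf_pvalue :: "nat \<Rightarrow> (nat \<Rightarrow> real) \<Rightarrow> nat \<Rightarrow> real" where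
  "conf_pvalue n s i = (1 + real (card {j. j < n \<and> s j \<ge> s (n + i)})) / real (n + 1)"

end

theory Submission
  imports Defs
begin

(*
  Given the calibration scores c, the p-value of a test score t is (1 + N(t)) / (n + 1), where
  N(t) counts the c_j with t <= c_j.  The event N(t) >= k is the half-line below the k-th
  largest calibration score, so its probability is F at that score; as 1 - F is antitone, this
  equals 1 - U_(k), the complement of the k-th smallest of the U_j = 1 - F(c_j).  Hence the
  p-value equals l / (n + 1) with conditional probability U_(l) - U_(l-1), i.e. it has law P^U.
  Since the scores are i.i.d., their joint law is the product measure, and Fubini over the
  calibration block turns the m independent test scores into the product of these conditional
  probabilities.

  Absence of ties makes the common law atomless, because P(S_1 = S_2 = a) = P(S_1 = a)^2.  Then
  F is continuous, and the probability integral transform shows that 1 - F(S_j) is uniform.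
*)

section \<open>Order statistics\<close>

lemma sorted_nth_iff_card:
  fixes xs :: "'a::linorder list"
  assumes "sorted xs" "i < length xs" and down: "\<And>x y. x \<le> y \<Longrightarrow> P y \<Longrightarrow> P x"
  shows "P (xs ! i) \<longleftrightarrow> i < card {p. p < length xs \<and> P (xs ! p)}"
proof
  assume "P (xs ! i)"
  then have "{..i} \<subseteq> {p. p < length xs \<and> P (xs ! p)}"
    using assms by (auto intro: down sorted_nth_mono)
  from card_mono[OF _ this] show "i < card {p. p < length xs \<and> P (xs ! p)}" by simp
next
  assume "i < card {p. p < length xs \<and> P (xs ! p)}"
  moreover have "{p. p < length xs \<and> P (xs ! p)} \<subseteq> {..<i}" if "\<not> P (xs ! i)"
  proof safe
    fix p assume "p < length xs" "P (xs ! p)"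
    show "p < i"
    proof (rule ccontr)
      assume "\<not> p < i"
      then have "xs ! i \<le> xs ! p"
        using assms(1) \<open>p < length xs\<close> by (simp add: sorted_nth_mono)
      with \<open>P (xs ! p)\<close> that show False using down by blast
    qed
  qed
  ultimately show "P (xs ! i)"
    using card_mono[of "{..<i}" "{p. p < length xs \<and> P (xs ! p)}"] by force
qed

lemma card_filter_sort:
  "card {p. p < n \<and> P (sort (map u [0..<n]) ! p)} = card {j. j < n \<and> P (u j)}"
proof -
  have "card {p. p < n \<and> P (sort (map u [0..<n]) ! p)} = length (filter P (sort (map u [0..<n])))"
    by (simp add: length_filter_conv_card)
  also have "\<dots> = length (filter P (map u [0..<n]))"
    by (metis mset_filter size_mset mset_sort)
  also have "\<dots> = card {j. j < n \<and> P (u j)}"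
    by (simp add: length_filter_conv_card) (intro arg_cong[where f = card], auto)
  finally show ?thesis .
qed

lemma card_filter_lessThan_compl:
  "card {j. j < n \<and> P j} + card {j. j < n \<and> \<not> P j} = n"
proof -
  have "card {j. j < n \<and> P j} + card {j. j < n \<and> \<not> P j}
      = card ({j. j < n \<and> P j} \<union> {j. j < n \<and> \<not> P j})"
    by (rule card_Un_disjoint[symmetric]) auto
  also have "{j. j < n \<and> P j} \<union> {j. j < n \<and> \<not> P j} = {..<n}"
    by auto
  finally show ?thesis by simp
qed

lemma order_stat_iff_card:
  assumes "1 \<le> k" "k \<le> n" and down: "\<And>x y. x \<le> y \<Longrightarrow> P y \<Longrightarrow> P x"
  shows "P (order_stat n u k) \<longleftrightarrow> k \<le> card {j. j < n \<and> P (u j)}"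
proof -
  have "P (order_stat n u k) \<longleftrightarrow> k - 1 < card {j. j < n \<and> P (u j)}"
    using assms sorted_nth_iff_card[of "sort (map u [0..<n])" "k - 1" P]
    by (simp add: order_stat_def card_filter_sort)
  then show ?thesis using assms(1) by auto
qed

lemma card_ge_iff_le_order_stat:
  fixes c :: "nat \<Rightarrow> real"
  assumes "1 \<le> k" "k \<le> n"
  shows "k \<le> card {j. j < n \<and> t \<le> c j} \<longleftrightarrow> t \<le> order_stat n c (n + 1 - k)"
proof -
  have "t \<le> order_stat n c (n + 1 - k) \<longleftrightarrow> \<not> n + 1 - k \<le> card {j. j < n \<and> c j < t}"
    using assms order_stat_iff_card[of "n + 1 - k" n "\<lambda>x. x < t" c] by force
  also have "\<dots> \<longleftrightarrow> k \<le> card {j. j < n \<and> t \<le> c j}"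
    using card_filter_lessThan_compl[of n "\<lambda>j. c j < t"] assms by (auto simp: not_less)
  finally show ?thesis by simp
qed

lemma order_stat_antimono_comp:
  fixes G :: "real \<Rightarrow> real" and c :: "nat \<Rightarrow> real"
  assumes G: "antimono G" and k: "1 \<le> k" "k \<le> n"
  shows "order_stat n (\<lambda>j. G (c j)) k = G (order_stat n c (n + 1 - k))"
proof -
  define a where "a = order_stat n c (n + 1 - k)"
  have many_ge: "k \<le> card {j. j < n \<and> a \<le> c j}"
    using card_ge_iff_le_order_stat[OF k] by (simp add: a_def)
  have "n + 1 - k \<le> card {j. j < n \<and> c j \<le> a}"
    using k order_stat_iff_card[of "n + 1 - k" n "\<lambda>x. x \<le> a" c] by (simp add: a_def)
  then have few_gt: "card {j. j < n \<and> a < c j} < k"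
    using card_filter_lessThan_compl[of n "\<lambda>j. c j \<le> a"] k by (simp add: not_le)
  have "order_stat n (\<lambda>j. G (c j)) k \<le> t \<longleftrightarrow> G a \<le> t" for t
  proof -
    have "order_stat n (\<lambda>j. G (c j)) k \<le> t \<longleftrightarrow> k \<le> card {j. j < n \<and> G (c j) \<le> t}"
      using order_stat_iff_card[OF k, of "\<lambda>x. x \<le> t"] by simp
    also have "\<dots> \<longleftrightarrow> G a \<le> t"
    proof
      assume many_le: "k \<le> card {j. j < n \<and> G (c j) \<le> t}"
      show "G a \<le> t"
      proof (rule ccontr)
        assume "\<not> G a \<le> t"
        then have "{j. j < n \<and> G (c j) \<le> t} \<subseteq> {j. j < n \<and> a < c j}"
          using G by (auto simp: not_less dest: antimonoD[where y = a])
        from card_mono[OF _ this] many_le few_gt show False by simp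
      qed
    next
      assume "G a \<le> t"
      then have "{j. j < n \<and> a \<le> c j} \<subseteq> {j. j < n \<and> G (c j) \<le> t}"
        using G by (auto dest: antimonoD[where x = a] intro: order.trans)
      from card_mono[OF _ this] many_ge show "k \<le> card {j. j < n \<and> G (c j) \<le> t}"
        by simp
    qed
    finally show ?thesis .
  qed
  then show ?thesis
    unfolding a_def by (meson order.refl order.antisym)
qed

lemma PU_cong:
  assumes "\<And>j. j < n \<Longrightarrow> u j = v j"
  shows "PU n u B = PU n v B"
proof -
  have "map u [0..<n] = map v [0..<n]"
    using assms by simp
  then have "order_stat n u = order_stat n v"
    unfolding order_stat_def by (simp only:)
  then show ?thesis
    unfolding PU_def by (simp only:)
qed

section \<open>The law of a conformal p-value given the calibration scores\<close>

definition calib_pvalue :: "nat \<Rightarrow> (nat \<Rightarrow> real) \<Rightarrow> real \<Rightarrow> real" where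
  "calib_pvalue n c t = (1 + real (card {j. j < n \<and> t \<le> c j})) / real (n + 1)"

lemma conf_pvalue_eq_calib_pvalue: "conf_pvalue n s i = calib_pvalue n s (s (n + i))"
  by (simp add: conf_pvalue_def calib_pvalue_def)

lemma calib_pvalue_cong:
  assumes "\<And>j. j < n \<Longrightarrow> c j = c' j"
  shows "calib_pvalue n c t = calib_pvalue n c' t"
proof -
  have "{j. j < n \<and> t \<le> c j} = {j. j < n \<and> t \<le> c' j}"
    using assms by auto
  then show ?thesis by (simp add: calib_pvalue_def)
qed

lemma borel_measurable_card_le:
  fixes n :: nat and f :: "'a \<Rightarrow> nat \<Rightarrow> real" and g :: "'a \<Rightarrow> real"
  assumes "\<And>j. j < n \<Longrightarrow> (\<lambda>w. f w j) \<in> borel_measurable N" and "g \<in> borel_measurable N"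
  shows "(\<lambda>w. real (card {j. j < n \<and> g w \<le> f w j})) \<in> borel_measurable N"
proof -
  have "{j. j < n \<and> g w \<le> f w j} = {..<n} \<inter> {j. g w \<le> f w j}" for w
    by auto
  then have "real (card {j. j < n \<and> g w \<le> f w j}) = (\<Sum>j<n. of_bool (g w \<le> f w j))" for w
    by simp
  moreover have "{w \<in> space N. g w \<le> f w j} \<in> sets N" if "j < n" for j
    using assms(2) assms(1)[OF that] by (rule borel_measurable_le)
  ultimately show ?thesis
    unfolding of_bool_def by (simp only:) (intro borel_measurable_sum measurable_If measurable_const; simp)
qed

lemma borel_measurable_calib_pvalue:
  assumes "\<And>j. j < n \<Longrightarrow> (\<lambda>w. f w j) \<in> borel_measurable N" and "g \<in> borel_measurable N"
  shows "(\<lambda>w. calib_pvalue n (f w) (g w)) \<in> borel_measurable N"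
  unfolding calib_pvalue_def using borel_measurable_card_le[OF assms] by measurable

context real_distribution
begin

lemma sets_card_ge:
  fixes c :: "nat \<Rightarrow> real"
  shows "{t. k \<le> card {j. j < n \<and> t \<le> c j}} \<in> sets M"
proof -
  have "(\<lambda>t. real (card {j. j < n \<and> t \<le> c j})) \<in> borel_measurable M"
    by (rule borel_measurable_card_le) simp_all
  from measurable_sets[OF this, of "{real k..}"] show ?thesis
    by (simp add: vimage_def)
qed

lemma sets_calib_pvalue_vimage:
  fixes c :: "nat \<Rightarrow> real"
  assumes "C \<in> sets borel"
  shows "{t. calib_pvalue n c t \<in> C} \<in> sets M"
proof -
  have "(\<lambda>t. calib_pvalue n c t) \<in> borel_measurable M"
    by (rule borel_measurable_calib_pvalue) simp_all
  from measurable_sets[OF this assms] show ?thesis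
    by (simp add: vimage_def)
qed

lemma measure_card_ge:
  fixes c :: "nat \<Rightarrow> real"
  assumes "k \<le> n + 1"
  shows "measure M {t. k \<le> card {j. j < n \<and> t \<le> c j}} = 1 - order_stat n (\<lambda>j. 1 - cdf M (c j)) k"
proof -
  consider "k = 0" | "k = n + 1" | "1 \<le> k" "k \<le> n"
    using assms by linarith
  then show ?thesis
  proof cases
    case 1
    then show ?thesis using prob_space by (simp add: order_stat_def)
  next
    case 2
    have "card {j. j < n \<and> t \<le> c j} \<le> n" for t
      using card_mono[of "{..<n}" "{j. j < n \<and> t \<le> c j}"] by auto
    then have "{t. k \<le> card {j. j < n \<and> t \<le> c j}} = {}"
      using 2 by (auto simp: not_le less_Suc_eq_le)
    then show ?thesis using 2 by (simp add: order_stat_def)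
  next
    case 3
    have "antimono (\<lambda>s. 1 - cdf M s)"
      by (intro antimonoI) (simp add: cdf_nondecreasing)
    then have "order_stat n (\<lambda>j. 1 - cdf M (c j)) k = 1 - cdf M (order_stat n c (n + 1 - k))"
      using order_stat_antimono_comp[OF _ 3] by blast
    moreover have "{t. k \<le> card {j. j < n \<and> t \<le> c j}} = {..order_stat n c (n + 1 - k)}"
      using card_ge_iff_le_order_stat[OF 3] by auto
    ultimately show ?thesis by (simp add: cdf_def)
  qed
qed

lemma measure_calib_pvalue_eq:
  fixes c :: "nat \<Rightarrow> real"
  assumes "1 \<le> l" "l \<le> n + 1"
  defines "os \<equiv> order_stat n (\<lambda>j. 1 - cdf M (c j))"
  shows "measure M {t. calib_pvalue n c t = real l / real (n + 1)} = os l - os (l - 1)"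
proof -
  define G where "G k = {t. k \<le> card {j. j < n \<and> t \<le> c j}}" for k
  have "{t. calib_pvalue n c t = real l / real (n + 1)} = G (l - 1) - G l"
    using assms(1) by (auto simp: calib_pvalue_def G_def)
  moreover have "measure M (G (l - 1) - G l) = measure M (G (l - 1)) - measure M (G l)"
    by (rule finite_measure_Diff) (auto simp: G_def sets_card_ge)
  ultimately show ?thesis
    using assms measure_card_ge[of "l - 1" n c] measure_card_ge[of l n c] by (simp add: G_def)
qed

lemma measure_calib_pvalue_in:
  fixes c :: "nat \<Rightarrow> real"
  shows "measure M {t. calib_pvalue n c t \<in> B} = PU n (\<lambda>j. 1 - cdf M (c j)) B"
proof -
  define L where "L = {l \<in> {1..n + 1}. real l / real (n + 1) \<in> B}"
  define E where "E l = {t. calib_pvalue n c t = real l / real (n + 1)}" for l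
  have card_le: "card {j. j < n \<and> t \<le> c j} \<le> n" for t
    using card_mono[of "{..<n}" "{j. j < n \<and> t \<le> c j}"] by auto
  have "{t. calib_pvalue n c t \<in> B} = (\<Union>l\<in>L. E l)"
  proof safe
    fix t assume "calib_pvalue n c t \<in> B"
    then show "t \<in> (\<Union>l\<in>L. E l)"
      using card_le[of t] unfolding L_def E_def calib_pvalue_def
      by (intro UN_I[of "card {j. j < n \<and> t \<le> c j} + 1"]) (auto simp: add.commute)
  qed (auto simp: L_def E_def)
  moreover have E_sets: "E l \<in> sets M" for l
    using sets_calib_pvalue_vimage[of "{real l / real (n + 1)}" n c] by (simp add: E_def)
  moreover have "measure M (\<Union>l\<in>L. E l) = (\<Sum>l\<in>L. measure M (E l))"
    using E_sets by (intro finite_measure_finite_Union) (auto simp: L_def E_def disjoint_family_on_def)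
  ultimately have "measure M {t. calib_pvalue n c t \<in> B} = (\<Sum>l\<in>L. measure M (E l))"
    by simp
  also have "\<dots> = (\<Sum>l\<in>L. order_stat n (\<lambda>j. 1 - cdf M (c j)) l
                           - order_stat n (\<lambda>j. 1 - cdf M (c j)) (l - 1))"
    unfolding L_def E_def by (intro sum.cong refl measure_calib_pvalue_eq) auto
  also have "\<dots> = PU n (\<lambda>j. 1 - cdf M (c j)) B"
    unfolding PU_def L_def by (rule sum.inter_filter) simp
  finally show ?thesis .
qed

lemma PU_cdf_nonneg: "0 \<le> PU n (\<lambda>j. 1 - cdf M (c j)) B"
  using measure_calib_pvalue_in[of n c B, symmetric] by simp

end

section \<open>The probability integral transform\<close>

lemma cdf_uniform_measure_unit_interval:
  "cdf (uniform_measure lborel {0..1::real}) x = max 0 (min 1 x)"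
proof -
  have "{0..1} \<inter> {..x} = {0..min 1 x}"
    by auto
  then show ?thesis
    by (simp add: cdf_def measure_uniform_measure)
qed

lemma (in prob_space) cdf_distr:
  assumes "random_variable borel X"
  shows "cdf (distr M borel X) s = prob {x \<in> space M. X x \<le> s}"
proof -
  have "cdf (distr M borel X) s = prob (X -` {..s} \<inter> space M)"
    unfolding cdf_def using assms by (rule measure_distr) simp
  also have "X -` {..s} \<inter> space M = {x \<in> space M. X x \<le> s}"
    by auto
  finally show ?thesis .
qed

context real_distribution
begin

lemma cdf_ge_eq_atLeast:
  assumes atomless: "\<And>a. measure M {a} = 0" and "0 < y" and "y \<le> cdf M s\<^sub>0"
  obtains q where "{s. y \<le> cdf M s} = {q..}" and "cdf M q = y"
proof -
  define Z where "Z = {s. y \<le> cdf M s}"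
  have cont: "isCont (cdf M) s" for s
    using atomless isCont_cdf by blast
  obtain b where b: "\<And>s. s \<le> b \<Longrightarrow> cdf M s < y"
    using order_tendstoD(2)[OF cdf_lim_at_bot \<open>0 < y\<close>] by (auto simp: eventually_at_bot_linorder)
  have bdd: "bdd_below Z"
    by (metis b Z_def bdd_belowI mem_Collect_eq not_le order.strict_implies_order)
  have "closed Z"
    unfolding Z_def using cont
    by (intro closed_Collect_le continuous_on_const) (auto intro: continuous_at_imp_continuous_on)
  moreover have "Z \<noteq> {}"
    using assms(3) by (auto simp: Z_def)
  ultimately have q: "Inf Z \<in> Z"
    using closed_contains_Inf bdd by blast
  have Z_eq: "Z = {Inf Z..}"
  proof safe
    fix s assume "s \<in> Z"
    then show "Inf Z \<le> s" using bdd by (rule cInf_lower)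
  next
    fix s assume "Inf Z \<le> s"
    then show "s \<in> Z" using q cdf_nondecreasing[of "Inf Z" s] by (simp add: Z_def)
  qed
  have "cdf M (Inf Z) \<le> y"
  proof (rule tendsto_upperbound[OF _ _ trivial_limit_at_left_real])
    show "(cdf M \<longlongrightarrow> cdf M (Inf Z)) (at_left (Inf Z))"
      using cont by (simp add: isCont_def filterlim_at_split)
    have "s \<notin> Z" if "s < Inf Z" for s
      using that by (subst Z_eq) simp
    then show "\<forall>\<^sub>F s in at_left (Inf Z). cdf M s \<le> y"
      by (intro eventually_at_leftI[of "Inf Z - 1"]) (auto simp: Z_def not_le less_imp_le)
  qed
  with q Z_eq that show thesis
    by (simp add: Z_def)
qed

lemma measure_cdf_ge:
  assumes atomless: "\<And>a. measure M {a} = 0" and "0 < y" "y \<le> 1"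
  shows "measure M {s. y \<le> cdf M s} = 1 - y"
proof (cases "\<exists>s. y \<le> cdf M s")
  case True
  then obtain q where q: "{s. y \<le> cdf M s} = {q..}" "cdf M q = y"
    using cdf_ge_eq_atLeast[OF atomless \<open>0 < y\<close>] by blast
  have "cdf M q = measure M {..<q} + measure M {q}"
    unfolding cdf_def by (subst finite_measure_Union[symmetric]) (auto intro: arg_cong[where f = "measure M"])
  moreover have "{q..} = space M - {..<q}"
    by auto
  ultimately show ?thesis
    using q atomless[of q] prob_compl[of "{..<q}"] by simp
next
  case False
  have "\<not> y < 1"
  proof
    assume "y < 1"
    then obtain s where "y < cdf M s"
      using order_tendstoD(1)[OF cdf_lim_at_top_prob] by (auto simp: eventually_at_top_linorder)
    with False show False
      using less_imp_le by blast
  qed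
  with False \<open>y \<le> 1\<close> show ?thesis
    by simp
qed

lemma borel_measurable_one_minus_cdf: "(\<lambda>s. 1 - cdf M s) \<in> borel_measurable borel"
  by (intro borel_measurable_diff borel_measurable_const borel_measurable_mono)
    (simp add: mono_def cdf_nondecreasing)

lemma cdf_distr_one_minus_cdf:
  assumes atomless: "\<And>a. measure M {a} = 0"
  shows "cdf (distr M borel (\<lambda>s. 1 - cdf M s)) x = max 0 (min 1 x)"
proof -
  have "cdf (distr M borel (\<lambda>s. 1 - cdf M s)) x = measure M {s. 1 - cdf M s \<le> x}"
    using prob_space.cdf_distr[OF prob_space_axioms] borel_measurable_one_minus_cdf by simp
  also have "{s. 1 - cdf M s \<le> x} = {s. 1 - x \<le> cdf M s}"
    by auto
  also have "measure M {s. 1 - x \<le> cdf M s} = max 0 (min 1 x)"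
  proof -
    consider "x < 0" | "0 \<le> x" "x < 1" | "1 \<le> x"
      by linarith
    then show ?thesis
    proof cases
      case 1
      then have "{s. 1 - x \<le> cdf M s} = {}"
        using cdf_bounded_prob by (auto simp: not_le intro: order.strict_trans1[OF cdf_bounded_prob])
      then show ?thesis using 1 by simp
    next
      case 2
      then show ?thesis using measure_cdf_ge[OF atomless, of "1 - x"] by simp
    next
      case 3
      then have "{s. 1 - x \<le> cdf M s} = space M"
        using cdf_nonneg by (auto intro: order.trans[of _ 0])
      then show ?thesis using 3 prob_space by simp
    qed
  qed
  finally show ?thesis .
qed

lemma distr_one_minus_cdf_uniform:
  assumes atomless: "\<And>a. measure M {a} = 0"
  shows "distr M lborel (\<lambda>s. 1 - cdf M s) = uniform_measure lborel {0..1}"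
proof -
  have "distr M lborel (\<lambda>s. 1 - cdf M s) = distr M borel (\<lambda>s. 1 - cdf M s)"
    by (rule distr_cong) simp_all
  also have "\<dots> = uniform_measure lborel {0..1}"
  proof (rule cdf_unique)
    show "real_distribution (distr M borel (\<lambda>s. 1 - cdf M s))"
      using borel_measurable_one_minus_cdf by simp
    show "real_distribution (uniform_measure lborel {0..1::real})"
      by (auto simp: real_distribution_def real_distribution_axioms_def intro!: prob_space_uniform_measure)
    show "cdf (distr M borel (\<lambda>s. 1 - cdf M s)) = cdf (uniform_measure lborel {0..1})"
      by (simp add: fun_eq_iff cdf_distr_one_minus_cdf[OF atomless] cdf_uniform_measure_unit_interval)
  qed
  finally show ?thesis .
qed

end

lemma (in prob_space) distr_one_minus_cdf_comp_uniform:
  assumes "random_variable borel X" and law: "distr M borel X = D"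
    and atomless: "\<And>a. measure D {a} = 0"
  shows "distr M lborel (\<lambda>x. 1 - cdf D (X x)) = uniform_measure lborel {0..1}"
proof -
  interpret D: real_distribution D
    using assms(1) law by auto
  have "distr M lborel (\<lambda>x. 1 - cdf D (X x)) = distr D lborel (\<lambda>s. 1 - cdf D s)"
    using assms(1) D.borel_measurable_one_minus_cdf
    by (simp add: law[symmetric] distr_distr comp_def)
  also have "\<dots> = uniform_measure lborel {0..1}"
    using atomless by (rule D.distr_one_minus_cdf_uniform)
  finally show ?thesis .
qed

lemma (in prob_space) measure_singleton_eq_0_if_no_ties:
  fixes X :: "'i \<Rightarrow> 'a \<Rightarrow> real"
  assumes indep: "indep_vars (\<lambda>_. borel) X {i, j}" and "i \<noteq> j"
    and law: "distr M borel (X i) = D" "distr M borel (X j) = D"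
    and no_tie: "AE x in M. X i x \<noteq> X j x"
  shows "measure D {a} = 0"
proof -
  let ?E = "\<Inter>k\<in>{i, j}. X k -` {a} \<inter> space M"
  have rv: "random_variable borel (X k)" if "k \<in> {i, j}" for k
    using indep that by (auto simp: indep_vars_def)
  have law_singleton: "measure D {a} = prob (X k -` {a} \<inter> space M)" if "k \<in> {i, j}" for k
  proof -
    have "D = distr M borel (X k)"
      using that law by auto
    then show ?thesis
      by (simp add: measure_distr rv[OF that])
  qed
  have "prob ?E = (\<Prod>k\<in>{i, j}. prob (X k -` {a} \<inter> space M))"
    by (rule indep_varsD[OF indep]) auto
  also have "\<dots> = measure D {a} * measure D {a}"
    using law_singleton[of i] law_singleton[of j] \<open>i \<noteq> j\<close> by simp
  finally have "prob ?E = measure D {a} * measure D {a}" .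
  moreover have "?E \<in> null_sets M"
  proof -
    have "AE x in M. x \<notin> ?E"
      using no_tie by eventually_elim auto
    moreover have "?E \<in> events"
      using rv by auto
    ultimately show ?thesis
      by (simp add: AE_iff_null_sets)
  qed
  ultimately show ?thesis
    by (simp add: measure_eq_0_null_sets)
qed

section \<open>Products of i.i.d. random variables\<close>

lemma (in prob_space) distr_restrict_eq_PiM_iid:
  assumes indep: "indep_vars (\<lambda>_. borel) X K" and "K \<noteq> {}"
    and law: "\<And>i. i \<in> K \<Longrightarrow> distr M borel (X i) = D"
  shows "distr M (PiM K (\<lambda>_. borel)) (\<lambda>x. \<lambda>i\<in>K. X i x) = PiM K (\<lambda>_. D)"
proof -
  have "random_variable borel (X i)" if "i \<in> K" for i
    using indep that by (auto simp: indep_vars_def)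
  with indep have "distr M (PiM K (\<lambda>_. borel)) (\<lambda>x. \<lambda>i\<in>K. X i x) = PiM K (\<lambda>i. distr M borel (X i))"
    by (subst (asm) indep_vars_iff_distr_eq_PiM'[OF \<open>K \<noteq> {}\<close>])
  also have "\<dots> = PiM K (\<lambda>_. D)"
    using law by (intro PiM_cong) auto
  finally show ?thesis .
qed

lemma (in prob_space) measure_vimage_restrict_iid:
  assumes indep: "indep_vars (\<lambda>_. borel) X K" and "K \<noteq> {}"
    and law: "\<And>i. i \<in> K \<Longrightarrow> distr M borel (X i) = D"
    and E: "E \<in> sets (PiM K (\<lambda>_. D))"
  shows "prob ((\<lambda>x. \<lambda>i\<in>K. X i x) -` E \<inter> space M) = measure (PiM K (\<lambda>_. D)) E"
proof -
  have X: "(\<lambda>x. \<lambda>i\<in>K. X i x) \<in> measurable M (PiM K (\<lambda>_. borel))"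
    using indep by (intro measurable_restrict) (auto simp: indep_vars_def)
  have "sets (PiM K (\<lambda>_. D)) = sets (PiM K (\<lambda>_. borel))"
    using law by (intro sets_PiM_cong refl) (metis sets_distr)
  with E have "E \<in> sets (PiM K (\<lambda>_. borel))"
    by blast
  from measure_distr[OF X this] show ?thesis
    by (simp add: distr_restrict_eq_PiM_iid[OF assms(1-3)])
qed

lemma (in prob_space) integral_restrict_iid:
  fixes X :: "'i \<Rightarrow> 'a \<Rightarrow> real" and g :: "('i \<Rightarrow> real) \<Rightarrow> real"
  assumes indep: "indep_vars (\<lambda>_. borel) X K" and "K \<noteq> {}"
    and law: "\<And>i. i \<in> K \<Longrightarrow> distr M borel (X i) = D"
    and g: "g \<in> borel_measurable (PiM K (\<lambda>_. D))"
  shows "(\<integral>x. g (\<lambda>i\<in>K. X i x) \<partial>M) = (\<integral>\<omega>. g \<omega> \<partial>PiM K (\<lambda>_. D))"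
proof -
  have X: "(\<lambda>x. \<lambda>i\<in>K. X i x) \<in> measurable M (PiM K (\<lambda>_. borel))"
    using indep by (intro measurable_restrict) (auto simp: indep_vars_def)
  have "sets (PiM K (\<lambda>_. D)) = sets (PiM K (\<lambda>_. borel))"
    using law by (intro sets_PiM_cong refl) (metis sets_distr)
  then have "g \<in> borel_measurable (PiM K (\<lambda>_. borel))"
    using g measurable_cong_sets[OF _ refl] by blast
  from integral_distr[OF X this] show ?thesis
    by (simp add: distr_restrict_eq_PiM_iid[OF assms(1-3)])
qed

lemma (in sigma_finite_measure) borel_measurable_measure_Pair_vimage:
  assumes f: "case_prod f \<in> borel_measurable (N \<Otimes>\<^sub>M M)" and B: "B \<in> sets borel"
  shows "(\<lambda>x. measure M {t \<in> space M. f x t \<in> B}) \<in> borel_measurable N"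
proof -
  let ?Q = "case_prod f -` B \<inter> space (N \<Otimes>\<^sub>M M)"
  have "?Q \<in> sets (N \<Otimes>\<^sub>M M)"
    using f B by (rule measurable_sets)
  then have "(\<lambda>x. enn2real (emeasure M (Pair x -` ?Q))) \<in> borel_measurable N"
    by (intro borel_measurable_enn2real measurable_emeasure_Pair)
  moreover have "Pair x -` ?Q = {t \<in> space M. f x t \<in> B}" if "x \<in> space N" for x
    using that by (auto simp: space_pair_measure)
  ultimately show ?thesis
    by (simp add: measure_def cong: measurable_cong)
qed

lemma (in product_sigma_finite) emeasure_PiM_merge_sections:
  assumes IJ: "I \<inter> J = {}" "finite I" "finite J"
    and E: "E \<in> sets (PiM (I \<union> J) M)"
    and Z: "\<And>x j. x \<in> space (PiM I M) \<Longrightarrow> j \<in> J \<Longrightarrow> Z x j \<in> sets (M j)"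
    and E_iff: "\<And>x y. x \<in> space (PiM I M) \<Longrightarrow> y \<in> space (PiM J M) \<Longrightarrow>
                  merge I J (x, y) \<in> E \<longleftrightarrow> x \<in> A \<and> (\<forall>j\<in>J. y j \<in> Z x j)"
  shows "emeasure (PiM (I \<union> J) M) E
           = (\<integral>\<^sup>+x. indicator A x * (\<Prod>j\<in>J. emeasure (M j) (Z x j)) \<partial>PiM I M)"
proof -
  have "emeasure (PiM (I \<union> J) M) E = (\<integral>\<^sup>+\<omega>. indicator E \<omega> \<partial>PiM (I \<union> J) M)"
    using E by simp
  also have "\<dots> = (\<integral>\<^sup>+x. \<integral>\<^sup>+y. indicator E (merge I J (x, y)) \<partial>PiM J M \<partial>PiM I M)"
    using E by (intro product_nn_integral_fold[OF IJ]) simp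
  also have "\<dots> = (\<integral>\<^sup>+x. indicator A x * (\<Prod>j\<in>J. emeasure (M j) (Z x j)) \<partial>PiM I M)"
  proof (rule nn_integral_cong)
    fix x assume x: "x \<in> space (PiM I M)"
    have "(\<integral>\<^sup>+y. indicator E (merge I J (x, y)) \<partial>PiM J M)
        = (\<integral>\<^sup>+y. indicator A x * indicator (PiE J (Z x)) y \<partial>PiM J M)"
      using E_iff[OF x] by (intro nn_integral_cong) (auto simp: indicator_def space_PiM PiE_iff)
    also have "\<dots> = indicator A x * emeasure (PiM J M) (PiE J (Z x))"
      using Z[OF x] IJ by (intro nn_integral_cmult_indicator sets_PiM_I_finite) auto
    also have "\<dots> = indicator A x * (\<Prod>j\<in>J. emeasure (M j) (Z x j))"
      using Z[OF x] IJ by (simp add: emeasure_PiM)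
    finally show "(\<integral>\<^sup>+y. indicator E (merge I J (x, y)) \<partial>PiM J M)
        = indicator A x * (\<Prod>j\<in>J. emeasure (M j) (Z x j))" .
  qed
  finally show ?thesis .
qed

section \<open>The joint law of calibration scores and p-values\<close>

definition pvalues_event :: "nat \<Rightarrow> nat \<Rightarrow> (nat \<Rightarrow> real) set \<Rightarrow> (nat \<Rightarrow> real set) \<Rightarrow> (nat \<Rightarrow> real) set"
  where "pvalues_event n m A B =
    {\<omega>. restrict \<omega> {..<n} \<in> A \<and> (\<forall>i<m. calib_pvalue n \<omega> (\<omega> (n + i)) \<in> B i)}"

lemma ball_atLeastLessThan_add_iff:
  fixes n m :: nat
  shows "(\<forall>j\<in>{n..<n + m}. P j) \<longleftrightarrow> (\<forall>i<m. P (n + i))"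
proof
  assume "\<forall>i<m. P (n + i)"
  moreover have "j = n + (j - n)" "j - n < m" if "j \<in> {n..<n + m}" for j
    using that by auto
  ultimately show "\<forall>j\<in>{n..<n + m}. P j" by metis
qed simp

lemma merge_mem_pvalues_event_iff:
  assumes "x \<in> extensional {..<n}"
  shows "merge {..<n} {n..<n + m} (x, y) \<in> pvalues_event n m A B
    \<longleftrightarrow> x \<in> A \<and> (\<forall>i<m. calib_pvalue n x (y (n + i)) \<in> B i)"
proof -
  have disj: "{..<n} \<inter> {n..<n + m} = {}"
    by auto
  then have "restrict (merge {..<n} {n..<n + m} (x, y)) {..<n} = x"
    using assms by (simp add: extensional_restrict)
  moreover have "calib_pvalue n (merge {..<n} {n..<n + m} (x, y)) t = calib_pvalue n x t" for t
    using disj by (intro calib_pvalue_cong) simp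
  moreover have "merge {..<n} {n..<n + m} (x, y) (n + i) = y (n + i)" if "i < m" for i
    using disj that by simp
  ultimately show ?thesis
    by (simp add: pvalues_event_def)
qed

lemma restrict_mem_pvalues_event_iff:
  "restrict s {..<n + m} \<in> pvalues_event n m A B
    \<longleftrightarrow> restrict s {..<n} \<in> A \<and> (\<forall>i<m. conf_pvalue n s i \<in> B i)"
proof -
  have "restrict (restrict s {..<n + m}) {..<n} = restrict s {..<n}"
    by (rule restrict_ext) simp
  moreover have "calib_pvalue n (restrict s {..<n + m}) t = calib_pvalue n s t" for t
    by (rule calib_pvalue_cong) simp
  ultimately show ?thesis
    by (simp add: pvalues_event_def conf_pvalue_eq_calib_pvalue)
qed

context real_distribution
begin

lemma borel_measurable_PiM_component:
  "j \<in> I \<Longrightarrow> (\<lambda>\<omega>. \<omega> j) \<in> borel_measurable (PiM I (\<lambda>_. M))"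
  using measurable_component_singleton[of j I "\<lambda>_. M"]
  by (simp add: measurable_cong_sets[OF refl events_eq_borel])

lemma borel_measurable_PU_cdf:
  assumes "{..<n} \<subseteq> I" and "B \<in> sets borel"
  shows "(\<lambda>x. PU n (\<lambda>j. 1 - cdf M (x j)) B) \<in> borel_measurable (PiM I (\<lambda>_. M))"
proof -
  have "(\<lambda>w. calib_pvalue n (fst w) (snd w)) \<in> borel_measurable (PiM I (\<lambda>_. M) \<Otimes>\<^sub>M M)"
    using assms(1)
    by (intro borel_measurable_calib_pvalue measurable_compose[OF measurable_fst borel_measurable_PiM_component])
      (auto simp: measurable_cong_sets[OF refl events_eq_borel, symmetric])
  then have "(\<lambda>x. measure M {t \<in> space M. calib_pvalue n x t \<in> B}) \<in> borel_measurable (PiM I (\<lambda>_. M))"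
    using assms(2) by (intro borel_measurable_measure_Pair_vimage) (simp_all add: case_prod_beta')
  then show ?thesis
    by (simp add: measure_calib_pvalue_in)
qed

lemma sets_PiM_pvalues_event:
  assumes A: "A \<in> sets (PiM {..<n} (\<lambda>_. borel))" and B: "\<And>i. i < m \<Longrightarrow> B i \<in> sets borel"
  shows "space (PiM {..<n + m} (\<lambda>_. M)) \<inter> pvalues_event n m A B \<in> sets (PiM {..<n + m} (\<lambda>_. M))"
  unfolding pvalues_event_def Int_def mem_Collect_eq
proof (rule sets.sets_Collect_conj)
  have "(\<lambda>\<omega>. restrict \<omega> {..<n}) \<in> measurable (PiM {..<n + m} (\<lambda>_. M)) (PiM {..<n} (\<lambda>_. M))"
    by (rule measurable_restrict_subset) simp
  moreover have "A \<in> sets (PiM {..<n} (\<lambda>_. M))"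
    using A by (subst sets_PiM_cong) auto
  ultimately show "{\<omega> \<in> space (PiM {..<n + m} (\<lambda>_. M)). restrict \<omega> {..<n} \<in> A}
      \<in> sets (PiM {..<n + m} (\<lambda>_. M))"
    by (intro predE pred_sets2)
  have "(\<lambda>\<omega>. calib_pvalue n \<omega> (\<omega> (n + i))) \<in> borel_measurable (PiM {..<n + m} (\<lambda>_. M))" if "i < m" for i
    using that by (intro borel_measurable_calib_pvalue borel_measurable_PiM_component) auto
  with B have "{\<omega> \<in> space (PiM {..<n + m} (\<lambda>_. M)). \<forall>i\<in>{..<m}. calib_pvalue n \<omega> (\<omega> (n + i)) \<in> B i}
      \<in> sets (PiM {..<n + m} (\<lambda>_. M))"
    by (intro sets.sets_Collect_finite_All predE pred_sets2) auto
  then show "{\<omega> \<in> space (PiM {..<n + m} (\<lambda>_. M)). \<forall>i<m. calib_pvalue n \<omega> (\<omega> (n + i)) \<in> B i}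
      \<in> sets (PiM {..<n + m} (\<lambda>_. M))"
    by (simp only: Ball_def lessThan_iff)
qed

lemma emeasure_PiM_pvalues_event:
  assumes A: "A \<in> sets (PiM {..<n} (\<lambda>_. borel))" and B: "\<And>i. i < m \<Longrightarrow> B i \<in> sets borel"
  shows "emeasure (PiM {..<n + m} (\<lambda>_. M)) (space (PiM {..<n + m} (\<lambda>_. M)) \<inter> pvalues_event n m A B)
    = (\<integral>\<^sup>+x. indicator A x * (\<Prod>i<m. ennreal (PU n (\<lambda>j. 1 - cdf M (x j)) (B i))) \<partial>PiM {..<n} (\<lambda>_. M))"
proof -
  interpret PS: product_prob_space "\<lambda>_::nat. M"
    by (intro product_prob_spaceI prob_space_axioms)
  define I where "I = {..<n}"
  define J where "J = {n..<n + m}"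
  have IJ: "I \<inter> J = {}" "finite I" "finite J" and K: "{..<n + m} = I \<union> J"
    by (auto simp: I_def J_def)
  have prod_J: "(\<Prod>j\<in>J. emeasure M {t. calib_pvalue n x t \<in> B (j - n)})
      = (\<Prod>i<m. ennreal (PU n (\<lambda>j. 1 - cdf M (x j)) (B i)))" for x
  proof -
    have "(\<Prod>j\<in>J. emeasure M {t. calib_pvalue n x t \<in> B (j - n)})
        = (\<Prod>i<m. emeasure M {t. calib_pvalue n x t \<in> B i})"
      unfolding J_def by (rule prod.reindex_bij_witness[of _ "\<lambda>i. n + i" "\<lambda>j. j - n"]) auto
    then show ?thesis
      by (simp add: emeasure_eq_measure measure_calib_pvalue_in)
  qed
  have "emeasure (PiM (I \<union> J) (\<lambda>_. M)) (space (PiM (I \<union> J) (\<lambda>_. M)) \<inter> pvalues_event n m A B)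
      = (\<integral>\<^sup>+x. indicator A x * (\<Prod>j\<in>J. emeasure M {t. calib_pvalue n x t \<in> B (j - n)}) \<partial>PiM I (\<lambda>_. M))"
  proof (rule PS.emeasure_PiM_merge_sections[OF IJ])
    show "space (PiM (I \<union> J) (\<lambda>_. M)) \<inter> pvalues_event n m A B \<in> sets (PiM (I \<union> J) (\<lambda>_. M))"
      unfolding K[symmetric] using A B by (rule sets_PiM_pvalues_event)
    fix x y assume "x \<in> space (PiM I (\<lambda>_. M))" "y \<in> space (PiM J (\<lambda>_. M))"
    moreover from this have "merge I J (x, y) \<in> space (PiM (I \<union> J) (\<lambda>_. M))"
      using IJ(1) by (auto simp: space_PiM PiE_def)
    ultimately show "merge I J (x, y) \<in> space (PiM (I \<union> J) (\<lambda>_. M)) \<inter> pvalues_event n m A B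
        \<longleftrightarrow> x \<in> A \<and> (\<forall>j\<in>J. y j \<in> {t. calib_pvalue n x t \<in> B (j - n)})"
      unfolding I_def J_def ball_atLeastLessThan_add_iff
      by (simp add: merge_mem_pvalues_event_iff space_PiM PiE_def)
  next
    fix x j assume "j \<in> J"
    then show "{t. calib_pvalue n x t \<in> B (j - n)} \<in> sets M"
      by (intro sets_calib_pvalue_vimage B) (auto simp: J_def)
  qed
  also have "\<dots> = (\<integral>\<^sup>+x. indicator A x * (\<Prod>i<m. ennreal (PU n (\<lambda>j. 1 - cdf M (x j)) (B i))) \<partial>PiM I (\<lambda>_. M))"
    by (simp only: prod_J)
  finally show ?thesis
    by (simp add: K I_def)
qed

lemma measure_PiM_pvalues_event:
  assumes A: "A \<in> sets (PiM {..<n} (\<lambda>_. borel))" and B: "\<And>i. i < m \<Longrightarrow> B i \<in> sets borel"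
  shows "measure (PiM {..<n + m} (\<lambda>_. M)) (space (PiM {..<n + m} (\<lambda>_. M)) \<inter> pvalues_event n m A B)
    = (\<integral>x. indicator A x * (\<Prod>i<m. PU n (\<lambda>j. 1 - cdf M (x j)) (B i)) \<partial>PiM {..<n} (\<lambda>_. M))"
proof -
  have "(\<Prod>i<m. ennreal (PU n (\<lambda>j. 1 - cdf M (x j)) (B i)))
      = ennreal (\<Prod>i<m. PU n (\<lambda>j. 1 - cdf M (x j)) (B i))" for x
    by (simp add: prod_ennreal PU_cdf_nonneg)
  then have "measure (PiM {..<n + m} (\<lambda>_. M)) (space (PiM {..<n + m} (\<lambda>_. M)) \<inter> pvalues_event n m A B)
      = enn2real (\<integral>\<^sup>+x. ennreal (indicator A x * (\<Prod>i<m. PU n (\<lambda>j. 1 - cdf M (x j)) (B i))) \<partial>PiM {..<n} (\<lambda>_. M))"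
    by (simp add: measure_def emeasure_PiM_pvalues_event[OF A B] ennreal_mult' ennreal_indicator)
  also have "\<dots> = (\<integral>x. indicator A x * (\<Prod>i<m. PU n (\<lambda>j. 1 - cdf M (x j)) (B i)) \<partial>PiM {..<n} (\<lambda>_. M))"
  proof (rule enn2real_nn_integral_eq_integral)
    have "A \<in> sets (PiM {..<n} (\<lambda>_. M))"
      using A by (subst sets_PiM_cong) auto
    then show "(\<lambda>x. indicator A x * (\<Prod>i<m. PU n (\<lambda>j. 1 - cdf M (x j)) (B i))) \<in> borel_measurable (PiM {..<n} (\<lambda>_. M))"
      using B by (intro borel_measurable_times borel_measurable_indicator borel_measurable_prod borel_measurable_PU_cdf) auto
  qed (auto simp: PU_cdf_nonneg intro!: AE_I2 mult_nonneg_nonneg prod_nonneg)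
  finally show ?thesis .
qed

end

lemma (in prob_space) measure_calibration_pvalues:
  fixes S :: "nat \<Rightarrow> 'a \<Rightarrow> real"
  assumes indep: "indep_vars (\<lambda>_. borel) S {..<n + m}" and "1 \<le> n"
    and law: "\<And>i. i < n + m \<Longrightarrow> distr M borel (S i) = D"
    and A: "A \<in> sets (PiM {..<n} (\<lambda>_. borel))" and B: "\<And>i. i < m \<Longrightarrow> B i \<in> sets borel"
  shows "prob {x \<in> space M. (\<lambda>j\<in>{..<n}. S j x) \<in> A \<and> (\<forall>i<m. conf_pvalue n (\<lambda>j. S j x) i \<in> B i)}
       = (\<integral>x. indicator A (\<lambda>j\<in>{..<n}. S j x) * (\<Prod>i<m. PU n (\<lambda>j. 1 - cdf D (S j x)) (B i)) \<partial>M)"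
proof -
  have rv: "random_variable borel (S i)" if "i < n + m" for i
    using indep that by (auto simp: indep_vars_def)
  interpret D: real_distribution D
    using law[of 0] rv[of 0] \<open>1 \<le> n\<close> by auto
  define E where "E = space (PiM {..<n + m} (\<lambda>_. D)) \<inter> pvalues_event n m A B"
  define g where "g x = indicator A x * (\<Prod>i<m. PU n (\<lambda>j. 1 - cdf D (x j)) (B i))" for x
  have nonempty: "{..<n} \<noteq> {}" "{..<n + m} \<noteq> {}"
    using \<open>1 \<le> n\<close> by (auto simp: lessThan_empty_iff)
  have "{x \<in> space M. (\<lambda>j\<in>{..<n}. S j x) \<in> A \<and> (\<forall>i<m. conf_pvalue n (\<lambda>j. S j x) i \<in> B i)}
      = (\<lambda>x. \<lambda>i\<in>{..<n + m}. S i x) -` E \<inter> space M"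
    using restrict_mem_pvalues_event_iff[of "\<lambda>j. S j _" n m A B]
    by (auto simp: E_def space_PiM)
  also have "prob \<dots> = measure (PiM {..<n + m} (\<lambda>_. D)) E"
    using indep nonempty(2) law D.sets_PiM_pvalues_event[OF A B]
    by (intro measure_vimage_restrict_iid) (auto simp: E_def)
  also have "\<dots> = (\<integral>x. g x \<partial>PiM {..<n} (\<lambda>_. D))"
    unfolding E_def g_def by (rule D.measure_PiM_pvalues_event[OF A B])
  also have "\<dots> = (\<integral>x. g (\<lambda>j\<in>{..<n}. S j x) \<partial>M)"
  proof (rule integral_restrict_iid[symmetric])
    show "indep_vars (\<lambda>_. borel) S {..<n}"
      using indep by (rule indep_vars_subset) simp
    have "A \<in> sets (PiM {..<n} (\<lambda>_. D))"
      using A by (subst sets_PiM_cong) auto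
    then show "g \<in> borel_measurable (PiM {..<n} (\<lambda>_. D))"
      unfolding g_def using B
      by (intro borel_measurable_times borel_measurable_indicator borel_measurable_prod D.borel_measurable_PU_cdf)
        auto
  qed (use nonempty law in auto)
  also have "\<dots> = (\<integral>x. indicator A (\<lambda>j\<in>{..<n}. S j x) * (\<Prod>i<m. PU n (\<lambda>j. 1 - cdf D (S j x)) (B i)) \<partial>M)"
    unfolding g_def by (intro Bochner_Integration.integral_cong refl arg_cong2[where f = "(*)"] prod.cong PU_cong) auto
  finally show ?thesis .
qed

theorem proposition1:
  fixes M :: "'a measure" and S :: "nat \<Rightarrow> 'a \<Rightarrow> real" and n m :: nat
  assumes "prob_space M"
    and "n \<ge> 1" and "m \<ge> 1"
    and indep: "prob_space.indep_vars M (\<lambda>_. borel) S {..<n+m}"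
    and ident: "\<forall>i<n+m. distr M borel (S i) = distr M borel (S 0)"
    and noties: "AE x in M. \<forall>i<n+m. \<forall>j<n+m. i \<noteq> j \<longrightarrow> S i x \<noteq> S j x"
  defines "F \<equiv> (\<lambda>s. measure M {x \<in> space M. S 0 x \<le> s})"
  defines "U \<equiv> (\<lambda>x j. 1 - F (S j x))"
  shows "(\<forall>A \<in> sets (PiM {..<n} (\<lambda>_. borel)). \<forall>B :: nat \<Rightarrow> real set. (\<forall>i<m. B i \<in> sets borel) \<longrightarrow>
            measure M {x \<in> space M. (\<lambda>j\<in>{..<n}. S j x) \<in> A \<and>
                                      (\<forall>i<m. conf_pvalue n (\<lambda>j. S j x) i \<in> B i)}
            = (\<integral>x. indicator A (\<lambda>j\<in>{..<n}. S j x) * (\<Prod>i<m. PU n (U x) (B i)) \<partial>M))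
       \<and> prob_space.indep_vars M (\<lambda>_. borel) (\<lambda>j x. U x j) {..<n}
       \<and> (\<forall>j<n. distr M lborel (\<lambda>x. U x j) = uniform_measure lborel {0..1})"
proof -
  interpret prob_space M by fact
  define D where "D = distr M borel (S 0)"
  have rv: "random_variable borel (S i)" if "i < n + m" for i
    using indep that by (auto simp: indep_vars_def)
  have law: "distr M borel (S i) = D" if "i < n + m" for i
    using ident that by (simp add: D_def)
  have U_eq: "U = (\<lambda>x j. 1 - cdf D (S j x))"
    using rv assms(2) by (simp add: U_def F_def D_def cdf_distr)
  have atomless: "measure D {a} = 0" for a
    using indep_vars_subset[OF indep, of "{0, 1}"] assms(2,3) law noties
    by (intro measure_singleton_eq_0_if_no_ties[of S 0 1]) (auto elim!: eventually_mono)
  have "indep_vars (\<lambda>_. borel) (\<lambda>j x. 1 - cdf D (S j x)) {..<n}"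
    using indep_vars_subset[OF indep] real_distribution.borel_measurable_one_minus_cdf[of D] rv assms(2)
    by (intro indep_vars_compose2[where Y = "\<lambda>_ s. 1 - cdf D s" and N = "\<lambda>_. borel"]) (auto simp: D_def)
  moreover have "distr M lborel (\<lambda>x. 1 - cdf D (S j x)) = uniform_measure lborel {0..1}" if "j < n" for j
    using that rv law atomless by (intro distr_one_minus_cdf_comp_uniform) auto
  ultimately show ?thesis
    using measure_calibration_pvalues[OF indep assms(2) law] by (auto simp: U_eq)
qed

end
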